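(* For integers $n\ge 0$ and $k\ge 0$ (as polynomial identity in $x$, $x\neq -1$), \[ \frac{d^{k}}{dx^{k}}w_{n}(x)=\frac{k!}{(1+x)^{k}}\sum_{m=k}^{n}\sum_{j=0}^{k}\binom{n}{m}\genfrac{\{}{\}}{0pt}{}{m}{k}\genfrac{[}{]}{0pt}{}{k+1}{j+1}\,w_{n-m+j}(x). \]
   Context: $\genfrac{\{}{\}}{0pt}{}{n}{k}$ denotes the Stirling numbers of the second kind and $\genfrac{[}{]}{0pt}{}{n}{k}$ the unsigned Stirling numbers of the first kind. The geometric polynomials are $w_n(x)=\sum_{k=0}^{n}\genfrac{\{}{\}}{0pt}{}{n}{k}k!\,x^k$. *)

theory Defs
  imports "HOL-Analysis.Analysis" "HOL-Combinatorics.Stirling"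
begin

text \<open>Geometric polynomials: w_n(x) = sum_{k=0}^n S(n,k) k! x^k, with S(n,k) the
Stirling numbers of the second kind (library constant Stirling).\<close>
definition geom_poly :: "nat \<Rightarrow> real \<Rightarrow> real" where
  "geom_poly n x = (\<Sum>k = 0..n. of_nat (Stirling n k) * fact k * x ^ k)"

end

theory Submission
  imports
    Defs
    "HOL-Computational_Algebra.Formal_Power_Series"
    "HOL-Computational_Algebra.Polynomial"
begin

(* In R[x][[t]] the exponential generating function H = sum_n w_n(x) t^n/n! is the inverse of
   U = 1 - x (e^t - 1).  Differentiating H U = 1 gives d/dx H = (e^t - 1) H^2 and
   d/dt H = (1 + x) H^2 - H.  Hence (d/dx)^k H = k! (e^t - 1)^k H^(k+1), while
   F_k = k! (1 + x)^k H^(k+1) satisfies F_(k+1) = (d/dt + k + 1) F_k; on coefficients this is the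
   recurrence of the Stirling numbers of the first kind, so the t^N coefficient of F_k is
   sum_j [k+1, j+1] w_(N+j)(x) / N!.  Comparing the t^n coefficients of
   (1 + x)^k (d/dx)^k H = (e^t - 1)^k F_k, where (e^t - 1)^k = k! sum_m S(m,k) t^m/m!,
   yields the theorem. *)

definition fps_map :: "('a \<Rightarrow> 'b) \<Rightarrow> 'a fps \<Rightarrow> 'b fps" where
  "fps_map h f = Abs_fps (\<lambda>n. h (fps_nth f n))"

lemma fps_map_nth [simp]: "fps_nth (fps_map h f) n = h (fps_nth f n)"
  by (simp add: fps_map_def)

lemma funpow_fps_map: "(fps_map h ^^ k) f = fps_map (h ^^ k) f" for h :: "'a \<Rightarrow> 'a"
  by (induction k) (simp_all add: fps_eq_iff)

locale derivation =
  fixes D :: "'a::comm_ring_1 \<Rightarrow> 'a"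
  assumes add: "D (x + y) = D x + D y"
    and leibniz: "D (x * y) = D x * y + x * D y"
begin

sublocale additive: additive D
  by unfold_locales (rule add)

lemma one: "D 1 = 0"
  using leibniz[of 1 1] by simp

lemma of_nat: "D (of_nat n) = 0"
  by (induction n) (simp_all add: add one additive.zero)

lemma power_Suc: "D (x ^ Suc k) = of_nat (Suc k) * x ^ k * D x"
  by (induction k) (simp_all add: leibniz algebra_simps)

lemma inverse:
  assumes "x * y = 1"
  shows "D x = - (x\<^sup>2 * D y)"
proof -
  have "D x * y = - (x * D y)"
    using leibniz[of x y] assms by (simp add: one eq_neg_iff_add_eq_0)
  then have "D x * (x * y) = - (x\<^sup>2 * D y)"
    by (simp add: algebra_simps power2_eq_square)
  then show ?thesis
    using assms by simp
qed

lemma fps_map: "derivation (fps_map D)"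
proof
  show "fps_map D (f + g) = fps_map D f + fps_map D g" for f g
    by (simp add: fps_eq_iff add)
  show "fps_map D (f * g) = fps_map D f * g + f * fps_map D g" for f g
    by (simp add: fps_eq_iff fps_mult_nth additive.sum leibniz sum.distrib)
qed

end

interpretation fps_deriv: derivation "fps_deriv :: 'a::comm_ring_1 fps \<Rightarrow> 'a fps"
  by unfold_locales simp_all

interpretation pderiv: derivation "pderiv :: 'a::idom poly \<Rightarrow> 'a poly"
  by unfold_locales (simp_all add: pderiv_add pderiv_mult mult.commute)

interpretation fps_pderiv: derivation "fps_map (pderiv :: 'a::idom poly \<Rightarrow> 'a poly)"
  by (rule pderiv.fps_map)

lemma fps_map_const_poly_mult:
  "fps_map (\<lambda>c. [:c:]) (f * g) = fps_map (\<lambda>c. [:c:]) f * fps_map (\<lambda>c. [:c:]) g"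
  for f g :: "'a::comm_ring_1 fps"
  by (simp add: fps_eq_iff fps_mult_nth sum_to_poly[symmetric] mult_to_poly mult.commute)

lemma fps_map_const_poly_power:
  "fps_map (\<lambda>c. [:c:]) (f ^ k) = fps_map (\<lambda>c. [:c:]) f ^ k" for f :: "'a::comm_ring_1 fps"
proof (induction k)
  case 0
  show ?case by (simp add: fps_eq_iff)
qed (simp add: fps_map_const_poly_mult)

lemma smult_sum_right: "smult c (\<Sum>x\<in>A. f x) = (\<Sum>x\<in>A. smult c (f x))"
  by (induction A rule: infinite_finite_induct) (simp_all add: smult_add_right)

lemma fps_exp_minus_one_power_nth:
  "fps_nth ((fps_exp 1 - 1) ^ j) n = (fact j * of_nat (Stirling n j) / fact n :: 'a::field_char_0)"
proof (induction n arbitrary: j)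
  case 0
  then show ?case by (cases j) (simp_all add: fps_power_zeroth)
next
  case (Suc n)
  show ?case
  proof (cases j)
    case 0
    then show ?thesis by simp
  next
    case (Suc i)
    let ?E = "fps_exp 1 - 1 :: 'a fps"
    have "fps_deriv (?E ^ Suc i) = of_nat (Suc i) * (?E ^ Suc i + ?E ^ i)"
      by (subst fps_deriv_power') (simp add: algebra_simps)
    then have "fps_nth (fps_deriv (?E ^ Suc i)) n =
        of_nat (Suc i) * (fps_nth (?E ^ Suc i) n + fps_nth (?E ^ i) n)"
      by (simp only: fps_mult_of_nat_nth fps_add_nth)
    then have "of_nat (Suc n) * fps_nth (?E ^ Suc i) (Suc n) =
        of_nat (Suc i) * (fps_nth (?E ^ Suc i) n + fps_nth (?E ^ i) n)"
      by (simp only: fps_deriv_nth Suc_eq_plus1)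
    then have "fps_nth (?E ^ Suc i) (Suc n) =
        of_nat (Suc i) * (fps_nth (?E ^ Suc i) n + fps_nth (?E ^ i) n) / of_nat (Suc n)"
      by (simp add: field_simps del: of_nat_Suc)
    also have "\<dots> = fact (Suc i) * of_nat (Stirling (Suc n) (Suc i)) / fact (Suc n)"
      unfolding Suc.IH by (simp add: field_simps)
    finally show ?thesis using Suc by simp
  qed
qed

definition geom_polynomial :: "nat \<Rightarrow> real poly" where
  "geom_polynomial n = (\<Sum>k\<le>n. monom (of_nat (Stirling n k) * fact k) k)"

lemma poly_geom_polynomial: "poly (geom_polynomial n) = geom_poly n"
  by (rule ext)
    (simp add: geom_polynomial_def geom_poly_def poly_sum poly_monom atLeast0AtMost mult_ac)

(* Power series in t with coefficients in R[x]: fps_const [:0, 1:] is x, fps_deriv is d/dt and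
   fps_map pderiv is d/dx. *)
definition geom_egf :: "real poly fps" where
  "geom_egf = Abs_fps (\<lambda>n. smult (1 / fact n) (geom_polynomial n))"

definition expm1_series :: "real poly fps" where
  "expm1_series = fps_map (\<lambda>c. [:c:]) (fps_exp 1 - 1)"

lemma expm1_series_power_nth:
  "fps_nth (expm1_series ^ k) n = [: fact k * of_nat (Stirling n k) / fact n :]"
  by (simp add: expm1_series_def fps_map_const_poly_power[symmetric] fps_exp_minus_one_power_nth)

lemma fps_deriv_expm1_series: "fps_deriv expm1_series = expm1_series + 1"
proof -
  have deriv_const:
    "fps_deriv (fps_map (\<lambda>c. [:c:]) f) = fps_map (\<lambda>c. [:c:]) (fps_deriv f)"
    for f :: "real fps"
    by (simp add: fps_eq_iff of_nat_poly mult_to_poly)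
  have deriv_expm1: "fps_deriv (fps_exp 1 - 1 :: real fps) = (fps_exp 1 - 1) + 1"
    by simp
  have "fps_deriv expm1_series = fps_map (\<lambda>c. [:c:]) ((fps_exp 1 - 1) + 1)"
    unfolding expm1_series_def deriv_const deriv_expm1 ..
  also have "\<dots> = expm1_series + 1"
    unfolding expm1_series_def by (simp add: fps_eq_iff pCons_one)
  finally show ?thesis .
qed

lemma fps_pderiv_expm1_series_power: "fps_map pderiv (expm1_series ^ k) = 0"
  by (simp add: fps_eq_iff expm1_series_power_nth pderiv_pCons)

lemma geom_egf_inverse: "geom_egf * (1 - fps_const [:0, 1:] * expm1_series) = 1"
proof -
  let ?q = "fps_const [:0, 1:] * expm1_series"
  have q_power_nth: "fps_nth (?q ^ j) n = monom (fact j * of_nat (Stirling n j) / fact n) j" for j n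
    by (simp add: power_mult_distrib expm1_series_power_nth monom_altdef mult.commute)
  have geom_egf_nth: "fps_nth geom_egf n = fps_nth (\<Sum>j\<le>N. ?q ^ j) n" if "n \<le> N" for n N
  proof -
    have "fps_nth (\<Sum>j\<le>N. ?q ^ j) n =
        (\<Sum>j\<le>N. monom (fact j * of_nat (Stirling n j) / fact n) j)"
      by (simp add: fps_sum_nth q_power_nth)
    also have "\<dots> = (\<Sum>j\<le>n. monom (fact j * of_nat (Stirling n j) / fact n) j)"
      by (rule sum.mono_neutral_right) (use that in auto)
    also have "\<dots> = fps_nth geom_egf n"
      by (simp add: geom_egf_def geom_polynomial_def smult_sum_right smult_monom mult_ac)
    finally show ?thesis by simp
  qed
  show ?thesis
  proof (rule fps_ext)
    fix n
    have "fps_nth (geom_egf * (1 - ?q)) n = fps_nth ((\<Sum>j\<le>n. ?q ^ j) * (1 - ?q)) n"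
      unfolding fps_mult_nth by (rule sum.cong) (simp_all add: geom_egf_nth)
    also have "(\<Sum>j\<le>n. ?q ^ j) * (1 - ?q) = 1 - ?q ^ Suc n"
      by (simp only: mult.commute[of _ "1 - ?q"] sum_gp_basic)
    also have "fps_nth (1 - ?q ^ Suc n) n = fps_nth 1 n"
      by (simp only: fps_sub_nth q_power_nth) simp
    finally show "fps_nth (geom_egf * (1 - ?q)) n = fps_nth 1 n" .
  qed
qed

lemma geom_egf_square_inverse:
  "geom_egf\<^sup>2 * (1 - fps_const [:0, 1:] * expm1_series) = geom_egf"
  using geom_egf_inverse by (simp add: power2_eq_square mult.assoc)

lemma fps_deriv_geom_egf: "fps_deriv geom_egf = fps_const [:1, 1:] * geom_egf\<^sup>2 - geom_egf"
proof -
  let ?U = "1 - fps_const [:0, 1:] * expm1_series"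
  have deriv_U: "fps_deriv ?U = ?U - fps_const [:1, 1:]"
    by (simp add: fps_deriv_expm1_series algebra_simps fps_const_add[symmetric] one_pCons)
  have "fps_deriv geom_egf = - (geom_egf\<^sup>2 * fps_deriv ?U)"
    by (rule fps_deriv.inverse[OF geom_egf_inverse])
  also have "\<dots> = fps_const [:1, 1:] * geom_egf\<^sup>2 - geom_egf\<^sup>2 * ?U"
    by (simp only: deriv_U) (simp add: algebra_simps)
  also have "geom_egf\<^sup>2 * ?U = geom_egf"
    by (rule geom_egf_square_inverse)
  finally show ?thesis .
qed

lemma fps_pderiv_geom_egf: "fps_map pderiv geom_egf = expm1_series * geom_egf\<^sup>2"
proof -
  have pderiv_X: "fps_map pderiv (fps_const [:0, 1:]) = 1"
    by (simp add: fps_eq_iff pderiv_pCons)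
  have pderiv_E: "fps_map pderiv expm1_series = 0"
    using fps_pderiv_expm1_series_power[of 1] by simp
  have "fps_map pderiv (1 - fps_const [:0, 1:] * expm1_series) = - expm1_series"
    unfolding fps_pderiv.additive.diff fps_pderiv.one fps_pderiv.leibniz pderiv_X pderiv_E by simp
  then show ?thesis
    using fps_pderiv.inverse[OF geom_egf_inverse] by (simp add: mult.commute)
qed

lemma fps_pderiv_power_geom_egf:
  "(fps_map pderiv ^^ k) geom_egf = of_nat (fact k) * expm1_series ^ k * geom_egf ^ Suc k"
proof (induction k)
  case (Suc k)
  have "(fps_map pderiv ^^ Suc k) geom_egf =
      fps_map pderiv (of_nat (fact k) * (expm1_series ^ k * geom_egf ^ Suc k))"
    using Suc.IH by (simp add: mult.assoc del: of_nat_fact)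
  also have "\<dots> = of_nat (fact k) * (expm1_series ^ k * fps_map pderiv (geom_egf ^ Suc k))"
    by (simp only: fps_pderiv.leibniz fps_pderiv.of_nat fps_pderiv_expm1_series_power) simp
  also have "\<dots> = of_nat (fact (Suc k)) * expm1_series ^ Suc k * geom_egf ^ Suc (Suc k)"
    by (simp only: fps_pderiv.power_Suc fps_pderiv_geom_egf)
      (simp add: algebra_simps power2_eq_square del: of_nat_fact)
  finally show ?case .
qed simp

definition geom_stirling_sum :: "nat \<Rightarrow> nat \<Rightarrow> real poly" where
  "geom_stirling_sum k N =
     (\<Sum>j\<le>k. smult (of_nat (stirling (Suc k) (Suc j))) (geom_polynomial (N + j)))"

lemma geom_stirling_sum_Suc:
  "geom_stirling_sum (Suc k) N =
     geom_stirling_sum k (Suc N) + smult (of_nat (Suc k)) (geom_stirling_sum k N)"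
proof -
  have "geom_stirling_sum (Suc k) N =
      (\<Sum>j\<le>Suc k. smult (of_nat (stirling (Suc k) j)) (geom_polynomial (N + j))) +
      (\<Sum>j\<le>Suc k. smult (of_nat (Suc k * stirling (Suc k) (Suc j)))
                           (geom_polynomial (N + j)))"
    unfolding geom_stirling_sum_def stirling.simps(4)[of "Suc k"]
    by (simp add: sum.distrib smult_add_left del: stirling.simps of_nat_Suc)
  also have "(\<Sum>j\<le>Suc k. smult (of_nat (stirling (Suc k) j)) (geom_polynomial (N + j))) =
      geom_stirling_sum k (Suc N)"
    unfolding geom_stirling_sum_def by (subst sum.atMost_Suc_shift) (simp del: stirling.simps)
  also have "(\<Sum>j\<le>Suc k. smult (of_nat (Suc k * stirling (Suc k) (Suc j)))
                               (geom_polynomial (N + j))) =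
      smult (of_nat (Suc k)) (geom_stirling_sum k N)"
    unfolding geom_stirling_sum_def by (simp add: smult_sum_right ring_distribs del: stirling.simps)
  finally show ?thesis .
qed

lemma geom_egf_power_nth:
  "fps_nth (of_nat (fact k) * fps_const [:1, 1:] ^ k * geom_egf ^ Suc k) N =
     smult (1 / fact N) (geom_stirling_sum k N)"
proof (induction k arbitrary: N)
  case 0
  show ?case by (simp add: geom_stirling_sum_def geom_egf_def)
next
  case (Suc k)
  define P :: "real poly fps" where "P = fps_const [:1, 1:]"
  define F where "F k = of_nat (fact k) * P ^ k * geom_egf ^ Suc k" for k
  have IH: "fps_nth (F k) M = smult (1 / fact M) (geom_stirling_sum k M)" for M
    unfolding F_def P_def by (rule Suc.IH)
  have deriv_P_power: "fps_deriv (P ^ k) = 0"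
    by (simp add: P_def)
  have deriv_power: "fps_deriv (geom_egf ^ Suc k) =
      of_nat (Suc k) * (P * geom_egf ^ Suc (Suc k) - geom_egf ^ Suc k)"
    by (simp only: fps_deriv.power_Suc fps_deriv_geom_egf P_def[symmetric])
      (simp add: right_diff_distrib power2_eq_square mult_ac)
  have deriv_F: "fps_deriv (F k) = of_nat (fact k) * P ^ k * fps_deriv (geom_egf ^ Suc k)"
    unfolding F_def fps_deriv.leibniz fps_deriv.of_nat deriv_P_power by simp
  have "F (Suc k) = fps_deriv (F k) + of_nat (Suc k) * F k"
    by (simp only: deriv_F deriv_power) (simp add: F_def algebra_simps del: of_nat_fact)
  then have "fps_nth (F (Suc k)) N =
      smult (of_nat (Suc N)) (fps_nth (F k) (Suc N)) + smult (of_nat (Suc k)) (fps_nth (F k) N)"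
    by (simp add: of_nat_poly del: of_nat_Suc)
  also have "\<dots> = smult (1 / fact N) (geom_stirling_sum (Suc k) N)"
    unfolding IH geom_stirling_sum_Suc
    by (simp add: smult_add_right field_simps del: of_nat_Suc)
  finally show ?case
    unfolding F_def P_def .
qed

lemma higher_pderiv_geom_polynomial:
  "[:1, 1:] ^ k * (pderiv ^^ k) (geom_polynomial n) =
     smult (fact k) (\<Sum>m = k..n. smult (of_nat (n choose m) * of_nat (Stirling m k))
                                    (geom_stirling_sum k (n - m)))"
proof -
  let ?S = "\<lambda>m. smult (of_nat (n choose m) * of_nat (Stirling m k))
                        (geom_stirling_sum k (n - m))"
  have series: "fps_const [:1, 1:] ^ k * (fps_map pderiv ^^ k) geom_egf =
      expm1_series ^ k * (of_nat (fact k) * fps_const [:1, 1:] ^ k * geom_egf ^ Suc k)"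
    by (simp add: fps_pderiv_power_geom_egf mult_ac del: of_nat_fact)
  have coeff: "fact k * of_nat (Stirling m k) / (fact (n - m) * fact m) =
      (fact k * (of_nat (n choose m) * of_nat (Stirling m k)) / fact n :: real)"
    if "m \<le> n" for m
    using that by (simp add: binomial_fact)
  have "smult (1 / fact n) ([:1, 1:] ^ k * (pderiv ^^ k) (geom_polynomial n)) =
      fps_nth (fps_const [:1, 1:] ^ k * (fps_map pderiv ^^ k) geom_egf) n"
    by (simp add: funpow_fps_map geom_egf_def higher_pderiv_smult)
  also have "\<dots> = (\<Sum>m = 0..n. [: fact k * of_nat (Stirling m k) / fact m :] *
      smult (1 / fact (n - m)) (geom_stirling_sum k (n - m)))"
    unfolding series fps_mult_nth[of "expm1_series ^ k"] expm1_series_power_nth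
      geom_egf_power_nth ..
  also have "\<dots> = smult (1 / fact n) (smult (fact k) (\<Sum>m = 0..n. ?S m))"
    unfolding smult_sum_right by (intro sum.cong refl) (simp add: coeff)
  also have "(\<Sum>m = 0..n. ?S m) = (\<Sum>m = k..n. ?S m)"
    by (rule sum.mono_neutral_right) auto
  finally show ?thesis
    by (rule smult_cancel[rotated]) simp
qed

lemma higher_deriv_poly:
  "(deriv ^^ k) (poly p) = poly ((pderiv ^^ k) p)" for p :: "'a::real_normed_field poly"
proof (induction k)
  case (Suc k)
  have "deriv (poly q) = poly (pderiv q)" for q :: "'a poly"
    by (rule ext) (rule DERIV_imp_deriv, rule poly_DERIV)
  with Suc.IH show ?case
    by simp
qed simp

theorem mainTheorem2:
  fixes n k :: nat and x :: real
  assumes "x \<noteq> -1"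
  shows "(deriv ^^ k) (geom_poly n) x =
    fact k / (1 + x) ^ k *
      (\<Sum>m = k..n. \<Sum>j = 0..k.
         of_nat (n choose m) * of_nat (Stirling m k) * of_nat (stirling (k + 1) (j + 1))
         * geom_poly (n - m + j) x)"
proof -
  have "(1 + x) ^ k * (deriv ^^ k) (geom_poly n) x =
      poly ([:1, 1:] ^ k * (pderiv ^^ k) (geom_polynomial n)) x"
    by (simp add: higher_deriv_poly poly_geom_polynomial[symmetric])
  also have "\<dots> = fact k *
      (\<Sum>m = k..n. \<Sum>j = 0..k.
         of_nat (n choose m) * of_nat (Stirling m k) * of_nat (stirling (k + 1) (j + 1))
         * geom_poly (n - m + j) x)"
    unfolding higher_pderiv_geom_polynomial
    by (simp add: poly_sum geom_stirling_sum_def poly_geom_polynomial sum_distrib_left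
        atLeast0AtMost mult_ac del: stirling.simps)
  finally show ?thesis
    using assms by (simp add: field_simps add_eq_0_iff)
qed

end
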